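(* Let $V:\mathbb{Z}\to\mathbb{R}$ with $|V(j)|\to0$ as $|j|\to\infty$ and $H=-\Delta+V$ on $\ell^2(\mathbb{Z})$, where $(\Delta u)(j)=u(j+1)-2u(j)+u(j-1)$. Let $e\in\mathbb{R}\setminus[0,4]$ be an eigenvalue of $H$ with $\dim\ker(H-e)=1$. For $a>0$ let $(T_au)(j)=e^{a|j|}u(j)$. Then for all sufficiently small $a>0$ there exist $e_a\in\mathbb{R}$ and $\phi_a\in\ell^2(\mathbb{Z})\setminus\{0\}$ such that $e_a\to e$ as $a\to0$ and $$T_a(-\Delta+V)T_a^{-1}\phi_a=e_a\phi_a.$$ *)

theory Defs
  imports "HOL-Analysis.Analysis" "HOL-Library.Function_Algebras"
begin

definition l2 :: "(int \<Rightarrow> complex) set" where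
  "l2 = {u. (\<lambda>j. (norm (u j))\<^sup>2) summable_on UNIV}"

definition lap :: "(int \<Rightarrow> complex) \<Rightarrow> int \<Rightarrow> complex" where
  "lap u j = u (j + 1) - 2 * u j + u (j - 1)"

definition schr :: "(int \<Rightarrow> real) \<Rightarrow> (int \<Rightarrow> complex) \<Rightarrow> int \<Rightarrow> complex" where
  "schr V u j = - lap u j + complex_of_real (V j) * u j"

definition Tw :: "real \<Rightarrow> (int \<Rightarrow> complex) \<Rightarrow> int \<Rightarrow> complex" where
  "Tw a u j = complex_of_real (exp (a * \<bar>real_of_int j\<bar>)) * u j"

definition Tw_inv :: "real \<Rightarrow> (int \<Rightarrow> complex) \<Rightarrow> int \<Rightarrow> complex" where
  "Tw_inv a u j = complex_of_real (exp (- a * \<bar>real_of_int j\<bar>)) * u j"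

definition sscale :: "complex \<Rightarrow> (int \<Rightarrow> complex) \<Rightarrow> int \<Rightarrow> complex" where
  "sscale c u = (\<lambda>j. c * u j)"

definition eigsp :: "(int \<Rightarrow> real) \<Rightarrow> real \<Rightarrow> (int \<Rightarrow> complex) set" where
  "eigsp V e = {u \<in> l2. schr V u = sscale (complex_of_real e) u}"

end

theory Submission
  imports Defs
begin

text \<open>Away from the spectrum [0,4] of the free Laplacian, the eigenvalue equation reads
  u(j+1) + u(j-1) = (2 - e + V j) u(j) with |2 - e| > 2. Since V decays, for |j| large the
  moduli s(j) = |u(j)| satisfy K s(j) \<le> s(j+1) + s(j-1) with a constant K > 2. A bounded
  nonnegative subsolution of this recurrence decays like r^|j|, where r < 1 is the small root
  of r + 1/r = K: otherwise the defect s(j+1) - r s(j) would grow like r^-n. Hence u decays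
  exponentially and T_a u is again square summable for e^a r < 1; it is an eigenvector of the
  conjugated operator for the same eigenvalue, so one can take e_a = e.\<close>

lemma recurrence_root_exists:
  fixes K :: real
  assumes "K > 2"
  shows "\<exists>r. 0 < r \<and> r < 1 \<and> r * K - r\<^sup>2 = 1"
proof -
  define q where "q = sqrt (K\<^sup>2 - 4)"
  have "2 * 2 < K * K"
    using assms by (intro mult_strict_mono) auto
  then have K4: "4 < K\<^sup>2"
    by (simp add: power2_eq_square)
  have q0: "q \<ge> 0" and qq: "q\<^sup>2 = K\<^sup>2 - 4"
    using K4 by (simp_all add: q_def)
  have "q\<^sup>2 < K\<^sup>2"
    using qq by linarith
  then have "q < K"
    by (rule power2_less_imp_less) (use assms in linarith)
  moreover have "K - 2 < q"
  proof (rule power2_less_imp_less)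
    show "(K - 2)\<^sup>2 < q\<^sup>2"
      using qq assms by (simp add: power2_eq_square algebra_simps)
  qed (rule q0)
  moreover have "(K - q) / 2 * K - ((K - q) / 2)\<^sup>2 = 1"
    using qq by (simp add: power2_eq_square field_simps)
  ultimately show ?thesis
    by (intro exI[of _ "(K - q) / 2"]) auto
qed

lemma bounded_subsolution_decay_step:
  fixes s :: "nat \<Rightarrow> real" and K r B :: real
  assumes nonneg: "\<And>n. 0 \<le> s n" and bounded: "\<And>n. s n \<le> B"
    and sub: "\<And>n. K * s (n + 1) \<le> s (n + 2) + s n"
    and r: "0 < r" "r < 1" "r * K - r\<^sup>2 = 1"
  shows "s (n + 1) \<le> r * s n"
proof (rule ccontr)
  define d where "d m = s (m + 1) - r * s m" for m
  assume "\<not> s (n + 1) \<le> r * s n"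
  hence dpos: "d n > 0"
    by (simp add: d_def)
  have d_grows: "d m \<le> r * d (m + 1)" for m
  proof -
    have "d m = (r * K - r\<^sup>2) * s (m + 1) - r * s m"
      using r(3) by (simp add: d_def)
    also have "\<dots> = r * (K * s (m + 1) - s m) - r\<^sup>2 * s (m + 1)"
      by (simp add: algebra_simps)
    also have "\<dots> \<le> r * s (m + 2) - r\<^sup>2 * s (m + 1)"
      using sub[of m] r(1) by (simp add: mult_left_mono)
    also have "\<dots> = r * d (m + 1)"
      by (simp add: d_def power2_eq_square algebra_simps)
    finally show ?thesis .
  qed
  have d_iter: "d n \<le> r ^ k * d (n + k)" for k
  proof (induction k)
    case (Suc k)
    have "r ^ k * d (n + k) \<le> r ^ k * (r * d (n + k + 1))"
      using d_grows[of "n + k"] r(1) by (simp add: mult_left_mono)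
    with Suc show ?case
      by (simp add: algebra_simps)
  qed simp
  have dB: "d m \<le> B" for m
    using bounded[of "m + 1"] mult_nonneg_nonneg[OF less_imp_le[OF r(1)] nonneg[of m]]
    by (simp add: d_def)
  have B0: "B > 0"
    using dB[of n] dpos by linarith
  obtain k where k: "r ^ k < d n / B"
    using real_arch_pow_inv[of "d n / B" r] dpos B0 r by auto
  have "d n \<le> r ^ k * B"
    using d_iter[of k] dB[of "n + k"] r(1) by (meson mult_left_mono order_trans zero_le_power less_imp_le)
  with k B0 show False
    by (simp add: field_simps)
qed

lemma bounded_subsolution_geometric_decay:
  fixes s :: "nat \<Rightarrow> real" and K r B :: real
  assumes "\<And>n. 0 \<le> s n" "\<And>n. s n \<le> B" "\<And>n. K * s (n + 1) \<le> s (n + 2) + s n"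
    and r: "0 < r" "r < 1" "r * K - r\<^sup>2 = 1"
  shows "s n \<le> s 0 * r ^ n"
proof (induction n)
  case (Suc n)
  have "s (n + 1) \<le> r * s n"
    by (rule bounded_subsolution_decay_step[OF assms])
  also have "\<dots> \<le> r * (s 0 * r ^ n)"
    using Suc r(1) by (simp add: mult_left_mono)
  finally show ?case
    by (simp add: algebra_simps)
qed simp

lemma bounded_subsolution_decay_right:
  fixes f :: "int \<Rightarrow> real" and K r B :: real and M :: int
  assumes nonneg: "\<And>j. 0 \<le> f j" and bounded: "\<And>j. f j \<le> B"
    and sub: "\<And>j. j > M \<Longrightarrow> K * f j \<le> f (j + 1) + f (j - 1)"
    and r: "0 < r" "r < 1" "r * K - r\<^sup>2 = 1"
  shows "f (M + int n) \<le> f M * r ^ n"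
proof -
  have "(\<lambda>n. f (M + int n)) n \<le> (\<lambda>n. f (M + int n)) 0 * r ^ n"
  proof (rule bounded_subsolution_geometric_decay[OF _ _ _ r])
    show "K * f (M + int (n + 1)) \<le> f (M + int (n + 2)) + f (M + int n)" for n
      using sub[of "M + int n + 1"] by (simp add: algebra_simps)
  qed (use nonneg bounded in auto)
  then show ?thesis
    by simp
qed

lemma bounded_subsolution_exponential_decay:
  fixes f :: "int \<Rightarrow> real" and K r B :: real and M :: int
  assumes nonneg: "\<And>j. 0 \<le> f j" and bounded: "\<And>j. f j \<le> B"
    and sub: "\<And>j. \<bar>j\<bar> > M \<Longrightarrow> K * f j \<le> f (j + 1) + f (j - 1)"
    and r: "0 < r" "r < 1" "r * K - r\<^sup>2 = 1"
    and M0: "M \<ge> 0"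
  shows "f j \<le> B / r ^ nat M * r ^ nat \<bar>j\<bar>"
proof -
  have rM: "r ^ nat M > 0"
    using r(1) by simp
  have B0: "B \<ge> 0"
    using nonneg[of 0] bounded[of 0] by linarith
  have tail: "g (M + int n) \<le> B / r ^ nat M * r ^ nat (M + int n)"
    if "\<And>j. 0 \<le> g j" "\<And>j. g j \<le> B" "\<And>j. j > M \<Longrightarrow> K * g j \<le> g (j + 1) + g (j - 1)"
    for g :: "int \<Rightarrow> real" and n
  proof -
    have "g (M + int n) \<le> g M * r ^ n"
      by (rule bounded_subsolution_decay_right[OF that r])
    also have "\<dots> \<le> B * r ^ n"
      using that(2)[of M] r(1) by (simp add: mult_right_mono)
    also have "\<dots> = B / r ^ nat M * r ^ (nat M + n)"
      using r(1) by (simp add: power_add)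
    also have "nat M + n = nat (M + int n)"
      using M0 by simp
    finally show ?thesis .
  qed
  consider "\<bar>j\<bar> \<le> M" | n where "j = M + int n" | n where "j = - (M + int n)"
  proof (cases "\<bar>j\<bar> \<le> M")
    case False
    then have "j = M + int (nat (j - M)) \<or> j = - (M + int (nat (- j - M)))"
      by linarith
    with that show ?thesis
      by blast
  qed
  then show ?thesis
  proof cases
    case 1
    have "r ^ nat M \<le> r ^ nat \<bar>j\<bar>"
      using 1 r by (intro power_decreasing) auto
    hence "B \<le> B / r ^ nat M * r ^ nat \<bar>j\<bar>"
      using rM B0 by (simp add: field_simps mult_left_mono)
    with bounded[of j] show ?thesis
      by linarith
  next
    case 2
    with tail[of f n] nonneg bounded sub show ?thesis
      using M0 by auto
  next
    case 3
    have "f (- (M + int n)) \<le> B / r ^ nat M * r ^ nat (M + int n)"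
      using tail[of "\<lambda>j. f (- j)" n] nonneg bounded sub[of "- _"]
      by (auto simp: add.commute)
    with 3 M0 show ?thesis
      by (simp add: add.commute)
  qed
qed

lemma geometric_summable_on_int:
  fixes \<rho> :: real
  assumes "0 \<le> \<rho>" "\<rho> < 1"
  shows "(\<lambda>j::int. \<rho> ^ nat \<bar>j\<bar>) summable_on UNIV"
proof -
  have g: "(\<lambda>n::nat. \<rho> ^ n) summable_on UNIV"
    using assms by (subst summable_on_UNIV_nonneg_real_iff) (auto intro: summable_geometric)
  have "(\<lambda>j::int. \<rho> ^ nat \<bar>j\<bar>) summable_on (range int)"
    by (subst summable_on_reindex) (auto simp: o_def g inj_on_def)
  moreover have "(\<lambda>j::int. \<rho> ^ nat \<bar>j\<bar>) summable_on (range (\<lambda>n. - int n))"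
    by (subst summable_on_reindex) (auto simp: o_def g inj_on_def)
  moreover have "range int \<union> range (\<lambda>n. - int n) = (UNIV :: int set)"
  proof -
    have "j \<in> range int \<union> range (\<lambda>n. - int n)" for j :: int
      by (cases "j \<ge> 0") (auto intro: image_eqI[of _ _ "nat j"] image_eqI[of _ _ "nat (- j)"])
    then show ?thesis
      by blast
  qed
  ultimately show ?thesis
    using summable_on_union by fastforce
qed

lemma l2_bounded:
  assumes "u \<in> l2"
  shows "\<exists>B. \<forall>j. norm (u j) \<le> B"
proof -
  define S where "S = infsum (\<lambda>j. (norm (u j))\<^sup>2) UNIV"
  have "(norm (u j))\<^sup>2 \<le> S" for j
  proof -
    have "infsum (\<lambda>j. (norm (u j))\<^sup>2) {j} \<le> S"
      using assms unfolding S_def l2_def by (intro infsum_mono_neutral) auto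
    then show ?thesis
      by simp
  qed
  moreover have "x \<le> 1 + x\<^sup>2" for x :: real
    using zero_le_power2[of "x - 1 / 2"] by (simp add: power2_eq_square algebra_simps)
  ultimately have "norm (u j) \<le> 1 + S" for j
    by (smt (verit))
  then show ?thesis
    by blast
qed

lemma Tw_l2_of_exponential_decay:
  fixes u :: "int \<Rightarrow> complex"
  assumes decay: "\<And>j. norm (u j) \<le> C * r ^ nat \<bar>j\<bar>" and r: "0 < r" "exp a * r < 1"
  shows "Tw a u \<in> l2"
proof -
  define \<rho> where "\<rho> = (exp a * r)\<^sup>2"
  have \<rho>: "0 \<le> \<rho>" "\<rho> < 1"
    using r by (auto simp: \<rho>_def power_less_one_iff abs_square_less_1)
  have "(norm (Tw a u j))\<^sup>2 \<le> C\<^sup>2 * \<rho> ^ nat \<bar>j\<bar>" for j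
  proof -
    have weight: "exp (a * \<bar>real_of_int j\<bar>) = exp a ^ nat \<bar>j\<bar>"
      by (metis exp_of_nat_mult mult.commute of_int_abs of_nat_nat abs_ge_zero of_int_of_nat_eq)
    have "norm (Tw a u j) = exp a ^ nat \<bar>j\<bar> * norm (u j)"
      by (simp add: Tw_def norm_mult norm_power weight)
    also have "\<dots> \<le> C * (exp a * r) ^ nat \<bar>j\<bar>"
      using decay[of j] by (simp add: mult_left_mono power_mult_distrib mult_ac)
    finally have "(norm (Tw a u j))\<^sup>2 \<le> (C * (exp a * r) ^ nat \<bar>j\<bar>)\<^sup>2"
      by (simp add: power_mono)
    then show ?thesis
      by (simp add: \<rho>_def power_mult_distrib power_mult[symmetric] mult.commute)
  qed
  then have "(\<lambda>j. (norm (Tw a u j))\<^sup>2) summable_on UNIV"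
    by (intro summable_on_comparison_test[OF summable_on_cmult_right[OF geometric_summable_on_int[OF \<rho>]]])
      auto
  then show ?thesis
    by (simp add: l2_def)
qed

lemma Tw_inv_Tw: "Tw_inv a (Tw a u) = u"
  by (rule ext) (simp add: Tw_def Tw_inv_def mult.assoc[symmetric] of_real_mult[symmetric] exp_add[symmetric])

lemma eigen_equation_recurrence:
  assumes "schr V u = sscale (complex_of_real e) u"
  shows "u (j + 1) + u (j - 1) = complex_of_real (2 - e + V j) * u j"
proof -
  have "schr V u j = sscale (complex_of_real e) u j"
    using assms by simp
  then show ?thesis
    by (simp add: schr_def lap_def sscale_def algebra_simps)
qed

lemma eigenfunction_exponential_decay:
  assumes decay: "\<forall>\<epsilon>>0. \<exists>N. \<forall>j::int. \<bar>j\<bar> \<ge> N \<longrightarrow> \<bar>V j\<bar> < \<epsilon>"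
    and out: "e \<notin> {0..4}"
    and u: "u \<in> l2" "schr V u = sscale (complex_of_real e) u"
  shows "\<exists>r C. 0 < r \<and> r < 1 \<and> (\<forall>j. norm (u j) \<le> C * r ^ nat \<bar>j\<bar>)"
proof -
  define \<delta> where "\<delta> = (\<bar>2 - e\<bar> - 2) / 2"
  have \<delta>0: "\<delta> > 0"
    using out by (auto simp: \<delta>_def)
  obtain N where N: "\<And>j. \<bar>j\<bar> \<ge> N \<Longrightarrow> \<bar>V j\<bar> < \<delta>"
    using decay \<delta>0 by blast
  define M where "M = max N 0"
  define K where "K = 2 + \<delta>"
  have sub: "K * norm (u j) \<le> norm (u (j + 1)) + norm (u (j - 1))" if "\<bar>j\<bar> > M" for j
  proof -
    have "\<bar>V j\<bar> < \<delta>"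
      using N[of j] that by (simp add: M_def)
    moreover have "\<bar>2 - e\<bar> \<le> \<bar>2 - e + V j\<bar> + \<bar>V j\<bar>"
      using abs_triangle_ineq[of "2 - e + V j" "- V j"] by simp
    ultimately have "K \<le> \<bar>2 - e + V j\<bar>"
      unfolding K_def \<delta>_def by (simp add: field_simps)
    hence "K * norm (u j) \<le> norm (u (j + 1) + u (j - 1))"
      unfolding eigen_equation_recurrence[OF u(2)] by (simp add: norm_mult mult_right_mono del: of_real_add)
    also have "\<dots> \<le> norm (u (j + 1)) + norm (u (j - 1))"
      by (rule norm_triangle_ineq)
    finally show ?thesis .
  qed
  obtain r where r: "0 < r" "r < 1" "r * K - r\<^sup>2 = 1"
    using recurrence_root_exists[of K] \<delta>0 by (auto simp: K_def)
  obtain B where B: "\<And>j. norm (u j) \<le> B"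
    using l2_bounded[OF u(1)] by blast
  have "norm (u j) \<le> B / r ^ nat M * r ^ nat \<bar>j\<bar>" for j
    by (rule bounded_subsolution_exponential_decay[OF _ B sub r]) (auto simp: M_def)
  with r show ?thesis
    by blast
qed

theorem lemmaA1:
  fixes V :: "int \<Rightarrow> real" and e :: real
  assumes decay: "\<forall>\<epsilon>>0. \<exists>N. \<forall>j::int. \<bar>j\<bar> \<ge> N \<longrightarrow> \<bar>V j\<bar> < \<epsilon>"
    and out: "e \<notin> {0..4}"
    and eig: "\<exists>u\<in>eigsp V e. u \<noteq> (\<lambda>_. 0)"
    and simple: "vector_space.dim sscale (eigsp V e) = 1"
  shows "\<exists>a0>0. \<exists>ea :: real \<Rightarrow> real. \<exists>\<phi> :: real \<Rightarrow> int \<Rightarrow> complex.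
           (ea \<longlongrightarrow> e) (at_right 0) \<and>
           (\<forall>a. 0 < a \<and> a < a0 \<longrightarrow>
              \<phi> a \<in> l2 \<and> \<phi> a \<noteq> (\<lambda>_. 0) \<and>
              Tw a (schr V (Tw_inv a (\<phi> a))) = sscale (complex_of_real (ea a)) (\<phi> a))"
proof -
  obtain u where u: "u \<in> l2" "schr V u = sscale (complex_of_real e) u" and unz: "u \<noteq> (\<lambda>_. 0)"
    using eig by (auto simp: eigsp_def)
  obtain r C where r: "0 < r" "r < 1" and uC: "\<And>j. norm (u j) \<le> C * r ^ nat \<bar>j\<bar>"
    using eigenfunction_exponential_decay[OF decay out u] by blast
  have "Tw a u \<in> l2 \<and> Tw a u \<noteq> (\<lambda>_. 0) \<and>
      Tw a (schr V (Tw_inv a (Tw a u))) = sscale (complex_of_real e) (Tw a u)"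
    if "0 < a" "a < ln (1 / r)" for a
  proof (intro conjI)
    have "exp a < 1 / r"
      using that r by (metis exp_less_mono exp_ln zero_less_divide_1_iff)
    then have "exp a * r < 1"
      using r by (simp add: field_simps)
    then show "Tw a u \<in> l2"
      using Tw_l2_of_exponential_decay[OF uC r(1)] by blast
    show "Tw a u \<noteq> (\<lambda>_. 0)"
      using unz by (auto simp: Tw_def fun_eq_iff)
    show "Tw a (schr V (Tw_inv a (Tw a u))) = sscale (complex_of_real e) (Tw a u)"
      unfolding Tw_inv_Tw u(2) by (rule ext) (simp add: Tw_def sscale_def)
  qed
  moreover have "ln (1 / r) > 0"
    using r by simp
  ultimately show ?thesis
    by (intro exI[of _ "ln (1 / r)"] conjI exI[of _ "\<lambda>_. e"] exI[of _ "\<lambda>a. Tw a u"]) auto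
qed

end
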